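(* Assume the setting below. There exists a constant $C\geq0$ (independent of $h$ and $\Delta x$) such that $$\sup_{n=0,\ldots,N,\ m\in\mathbb Z^d}|\widehat v(t_n,x_m)-V(t_n,x_m)|\leq C\frac{|\Delta x|}{h}.$$
   Context: Let $T>0$, $d,p,q\ge1$, let $A\subseteq\mathbb R^q$ be a compact subset of a separable metric space, and let $\mu:[0,T]\times\mathbb R^d\times A\to\mathbb R^d$, $\sigma:[0,T]\times\mathbb R^d\times A\to\mathbb R^{d\times p}$ be continuous with $|\mu(t,x,a)-\mu(s,y,a)|+\|\sigma(t,x,a)-\sigma(s,y,a)\|\leq C_0(|x-y|+|t-s|^{1/2})$ for all arguments. Let $\psi:\mathbb R^d\to\mathbb R$ be continuous with $|\psi(x)-\psi(y)|\le L|x-y|$. Let $N\ge1$, $h=T/N$, $t_n=nh$. Let $M\ge2$ and $(\hat\lambda_i,\hat\xi_i)_{i=1}^{\hat M}$, $\hat\lambda_i\ge0$, $\hat\xi_i\in\mathbb R^p$, a cubature rule exact for all polynomials of degree $\le2M-1$ with respect to $\mathcal N(0,I_p)$. Define $\widehat v(t_N,\cdot)=\psi$ and $\widehat v(t_n,x)=\sup_{a\in A}\sum_i\hat\lambda_i\widehat v(t_{n+1},x+\mu(t_n,x,a)h+\sqrt h\sigma(t_n,x,a)\hat\xi_i)$ for $n=N-1,\dots,0$, $x\in\mathbb R^d$. Let $\Delta x=(\Delta x_1,\ldots,\Delta x_d)$ with $\Delta x_j>0$, grid $\mathcal G_{\Delta x}=\{x_m=m\Delta x:\ m\in\mathbb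 Z^d\}$ (componentwise product), and let $\mathcal I[\phi]$ be the standard multilinear interpolant of a function $\phi$ on this grid (so $\mathcal I[\phi](x_m)=\phi(x_m)$, $|\mathcal I[\phi](x)-\phi(x)|\le L_\phi|\Delta x|$ for $L_\phi$-Lipschitz $\phi$, and $\phi_1\le\phi_2\Rightarrow\mathcal I[\phi_1]\le\mathcal I[\phi_2]$). Define $V(t_N,x_m)=\psi(x_m)$ and for $n=N-1,\ldots,0$, $m\in\mathbb Z^d$: $V(t_n,x_m)=\sup_{a\in A}\sum_{i=1}^{\hat M}\hat\lambda_i\,\mathcal I[V(t_{n+1},\cdot)]\big(x_m+\mu(t_n,x_m,a)h+\sqrt h\sigma(t_n,x_m,a)\hat\xi_i\big)$. *)

theory Defs
  imports "HOL-Probability.Probability"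
begin

definition grid_pt :: "real^'d \<Rightarrow> int^'d \<Rightarrow> real^'d" where
  "grid_pt dx m = (\<chi> j. real_of_int (m$j) * dx$j)"

text \<open>Standard multilinear (Q1) interpolant of grid data phi (phi m = value at x_m).\<close>
definition interp :: "real^'d \<Rightarrow> (int^'d \<Rightarrow> real) \<Rightarrow> real^'d \<Rightarrow> real" where
  "interp dx phi x =
     (let m = (\<chi> j. \<lfloor>x$j / dx$j\<rfloor>);
          \<theta> = (\<lambda>j. x$j / dx$j - real_of_int (m$j))
      in \<Sum>e\<in>(UNIV::('d \<Rightarrow> bool) set).
           (\<Prod>j\<in>UNIV. if e j then \<theta> j else 1 - \<theta> j)
           * phi (\<chi> j. m$j + (if e j then 1 else 0)))"

definition gauss_moment :: "('p::finite \<Rightarrow> nat) \<Rightarrow> real" where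
  "gauss_moment \<alpha> =
     (LINT x|lborel. (\<Prod>j\<in>UNIV. ((x::real^'p)$j) ^ (\<alpha> j)) * (\<Prod>j\<in>UNIV. std_normal_density (x$j)))"

text \<open>Cubature rule (weights lam i, nodes xi i, i < Mh) exact for all polynomials of
  total degree \<le> K w.r.t. N(0,I_p), i.e. (by linearity) for all monomials of degree \<le> K.\<close>
definition cubature_exact :: "nat \<Rightarrow> (nat \<Rightarrow> real) \<Rightarrow> (nat \<Rightarrow> real^'p) \<Rightarrow> nat \<Rightarrow> bool" where
  "cubature_exact Mh lam xi K =
     (\<forall>\<alpha>::'p \<Rightarrow> nat. (\<Sum>j\<in>UNIV. \<alpha> j) \<le> K \<longrightarrow>
        (\<Sum>i<Mh. lam i * (\<Prod>j\<in>UNIV. (xi i $ j) ^ (\<alpha> j))) = gauss_moment \<alpha>)"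

definition dp_step ::
  "real \<Rightarrow> (real \<Rightarrow> real^'d \<Rightarrow> real^'q \<Rightarrow> real^'d) \<Rightarrow> (real \<Rightarrow> real^'d \<Rightarrow> real^'q \<Rightarrow> real^'p^'d)
   \<Rightarrow> (real^'q) set \<Rightarrow> nat \<Rightarrow> (nat \<Rightarrow> real) \<Rightarrow> (nat \<Rightarrow> real^'p)
   \<Rightarrow> real \<Rightarrow> (real^'d \<Rightarrow> real) \<Rightarrow> real^'d \<Rightarrow> real" where
  "dp_step h mu sg A Mh lam xi t f x =
     (SUP a\<in>A. \<Sum>i<Mh. lam i * f (x + h *\<^sub>R mu t x a + sqrt h *\<^sub>R (sg t x a *v xi i)))"

text \<open>Semi-discrete scheme, indexed by k = N - n (number of backward steps done); h = T/N.\<close>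
primrec vhat_rev ::
  "real \<Rightarrow> nat \<Rightarrow> (real \<Rightarrow> real^'d \<Rightarrow> real^'q \<Rightarrow> real^'d) \<Rightarrow> (real \<Rightarrow> real^'d \<Rightarrow> real^'q \<Rightarrow> real^'p^'d)
   \<Rightarrow> (real^'q) set \<Rightarrow> nat \<Rightarrow> (nat \<Rightarrow> real) \<Rightarrow> (nat \<Rightarrow> real^'p) \<Rightarrow> (real^'d \<Rightarrow> real)
   \<Rightarrow> nat \<Rightarrow> real^'d \<Rightarrow> real" where
  "vhat_rev T N mu sg A Mh lam xi psi 0 = psi"
| "vhat_rev T N mu sg A Mh lam xi psi (Suc k) =
     dp_step (T / real N) mu sg A Mh lam xi (real (N - Suc k) * (T / real N))
       (vhat_rev T N mu sg A Mh lam xi psi k)"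

definition vhat where
  "vhat T N mu sg A Mh lam xi psi n = vhat_rev T N mu sg A Mh lam xi psi (N - n)"

primrec V_rev ::
  "real \<Rightarrow> nat \<Rightarrow> (real \<Rightarrow> real^'d \<Rightarrow> real^'q \<Rightarrow> real^'d) \<Rightarrow> (real \<Rightarrow> real^'d \<Rightarrow> real^'q \<Rightarrow> real^'p^'d)
   \<Rightarrow> (real^'q) set \<Rightarrow> nat \<Rightarrow> (nat \<Rightarrow> real) \<Rightarrow> (nat \<Rightarrow> real^'p) \<Rightarrow> (real^'d \<Rightarrow> real)
   \<Rightarrow> real^'d \<Rightarrow> nat \<Rightarrow> int^'d \<Rightarrow> real" where
  "V_rev T N mu sg A Mh lam xi psi dx 0 = (\<lambda>m. psi (grid_pt dx m))"
| "V_rev T N mu sg A Mh lam xi psi dx (Suc k) =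
     (\<lambda>m. dp_step (T / real N) mu sg A Mh lam xi (real (N - Suc k) * (T / real N))
            (interp dx (V_rev T N mu sg A Mh lam xi psi dx k)) (grid_pt dx m))"

definition V where
  "V T N mu sg A Mh lam xi psi dx n = V_rev T N mu sg A Mh lam xi psi dx (N - n)"

end

(*
  Both schemes apply the same one-step operator, a supremum over controls of cubature averages,
  which is nonexpansive in the sup norm; the fully discrete scheme in addition replaces the value
  function by its multilinear interpolant, a convex combination of grid values within distance
  |dx| of the evaluation point. So each backward step adds at most Lambda |dx| to the grid error,
  where Lambda bounds the Lipschitz constants of the semi-discrete value functions.
  One step multiplies a Lipschitz constant by at most 1 + K h (K = growth_rate): the cubature
  nodes have mean zero, so the noise of size sqrt h enters the mean displacement of two
  trajectories only through its square, i.e. at order h. Hence Lambda = L exp(K T), and after at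
  most N = T / h steps the error is at most T L exp(K T) |dx| / h.
*)
theory Submission
  imports Defs
begin

lemma integral_lborel_prod:
  fixes f :: "'a::euclidean_space \<Rightarrow> real \<Rightarrow> real"
  assumes "\<And>b. b \<in> Basis \<Longrightarrow> integrable lborel (f b)"
  shows "(LINT x|lborel. (\<Prod>b\<in>Basis. f b (x \<bullet> b))) = (\<Prod>b\<in>Basis. (LINT x|lborel. f b x))"
proof -
  have [measurable]: "\<And>b. b \<in> Basis \<Longrightarrow> f b \<in> borel_measurable borel"
    using assms borel_measurable_integrable by fastforce
  have m: "(\<lambda>g. \<Sum>b\<in>Basis. g b *\<^sub>R b) \<in> (\<Pi>\<^sub>M b\<in>(Basis::'a set). lborel) \<rightarrow>\<^sub>M borel"
    by measurable
  have "(LINT x|lborel. (\<Prod>b\<in>Basis. f b (x \<bullet> b))) =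
     (LINT g|(\<Pi>\<^sub>M b\<in>(Basis::'a set). lborel). (\<Prod>b\<in>Basis. f b ((\<Sum>b\<in>Basis. g b *\<^sub>R b) \<bullet> b)))"
    by (subst lborel_eq, rule integral_distr[OF m]) measurable
  also have "\<dots> = (LINT g|(\<Pi>\<^sub>M b\<in>(Basis::'a set). lborel). (\<Prod>b\<in>Basis. f b (g b)))"
    by (intro Bochner_Integration.integral_cong prod.cong refl)
       (simp add: inner_sum_left inner_Basis if_distrib cong: if_cong)
  also have "\<dots> = (\<Prod>b\<in>Basis. (LINT x|lborel. f b x))"
    using assms
    by (intro product_sigma_finite.product_integral_prod)
       (auto intro: product_sigma_finite.intro simp: lborel.sigma_finite_measure_axioms)
  finally show ?thesis .
qed

lemma integral_lborel_prod_cart: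
  fixes g :: "'n::finite \<Rightarrow> real \<Rightarrow> real"
  assumes "\<And>j. integrable lborel (g j)"
  shows "(LINT x|lborel. (\<Prod>j\<in>UNIV. g j ((x::real^'n) $ j))) = (\<Prod>j\<in>UNIV. (LINT s|lborel. g j s))"
proof -
  define f where "f b = g (axis_index b)" for b :: "real^'n"
  have Basis: "(Basis :: (real^'n) set) = range (\<lambda>j. axis j 1)"
    by (auto simp: Basis_vec_def)
  have inj: "inj (\<lambda>j::'n. axis j (1::real))"
    by (auto simp: inj_on_def axis_eq_axis)
  have f_axis: "f (axis j 1) = g j" for j
    by (simp add: f_def axis_index_def axis_eq_axis)
  have "(LINT x|lborel. (\<Prod>j\<in>UNIV. g j ((x::real^'n) $ j))) = (LINT x|lborel. (\<Prod>b\<in>Basis. f b (x \<bullet> b)))"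
    unfolding Basis prod.reindex[OF inj] by (simp add: f_axis cart_eq_inner_axis)
  also have "\<dots> = (\<Prod>b\<in>Basis. (LINT x|lborel. f b x))"
    by (rule integral_lborel_prod) (auto simp: Basis f_axis assms)
  also have "\<dots> = (\<Prod>j\<in>UNIV. (LINT s|lborel. g j s))"
    unfolding Basis prod.reindex[OF inj] by (simp add: f_axis)
  finally show ?thesis .
qed

lemma gauss_moment_eq_prod:
  "gauss_moment (\<alpha>::'p::finite \<Rightarrow> nat) = (\<Prod>j\<in>UNIV. LBINT s. std_normal_density s * s ^ \<alpha> j)"
proof -
  have "gauss_moment \<alpha> =
      (LINT x|lborel. (\<Prod>j\<in>UNIV. std_normal_density ((x::real^'p) $ j) * (x $ j) ^ \<alpha> j))"
    unfolding gauss_moment_def prod.distrib by (simp add: mult.commute)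
  also have "\<dots> = (\<Prod>j\<in>UNIV. LBINT s. std_normal_density s * s ^ \<alpha> j)"
    by (rule integral_lborel_prod_cart) (rule integrable_std_normal_moment)
  finally show ?thesis .
qed

lemma cubature_exact_sum_weights:
  assumes "cubature_exact Mh lam (xi :: nat \<Rightarrow> real^'p) K"
  shows "(\<Sum>i<Mh. lam i) = 1"
proof -
  have "(\<Sum>i<Mh. lam i) = gauss_moment (\<lambda>_::'p. 0::nat)"
    using assms unfolding cubature_exact_def by (drule_tac x="\<lambda>_. 0" in spec) simp
  also have "\<dots> = 1"
    unfolding gauss_moment_eq_prod using integral_std_normal_moment_even[of 0] by simp
  finally show ?thesis .
qed

lemma cubature_exact_sum_nodes:
  assumes "cubature_exact Mh lam (xi :: nat \<Rightarrow> real^'p) K" "1 \<le> K"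
  shows "(\<Sum>i<Mh. lam i *\<^sub>R xi i) = 0"
proof (unfold vec_eq_iff, intro allI)
  fix k
  define \<alpha> where "\<alpha> = (\<lambda>j::'p. if j = k then 1 else (0::nat))"
  have monomial: "(\<Prod>j\<in>UNIV. (xi i $ j) ^ (\<alpha> j)) = xi i $ k" for i
    by (simp add: \<alpha>_def if_distrib prod.If_cases cong: if_cong)
  have "(\<Sum>i<Mh. lam i * xi i $ k) = gauss_moment \<alpha>"
    using assms unfolding cubature_exact_def monomial[symmetric] by (auto simp: \<alpha>_def)
  also have "\<dots> = 0"
    unfolding gauss_moment_eq_prod using integral_std_normal_moment_odd[of 0]
    by (auto simp: \<alpha>_def intro!: prod_zero bexI[of _ k])
  finally show "(\<Sum>i<Mh. lam i *\<^sub>R xi i) $ k = 0 $ k"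
    by (simp add: sum_component)
qed

lemma abs_cSUP_diff_le:
  fixes f g :: "'a \<Rightarrow> real"
  assumes "A \<noteq> {}" "bdd_above (f ` A)" "\<And>a. a \<in> A \<Longrightarrow> \<bar>f a - g a\<bar> \<le> c"
  shows "\<bar>(SUP a\<in>A. f a) - (SUP a\<in>A. g a)\<bar> \<le> c"
proof -
  obtain B where B: "\<And>a. a \<in> A \<Longrightarrow> f a \<le> B"
    using assms(2) by (auto simp: bdd_above_def)
  have bdd_g: "bdd_above (g ` A)"
    using B assms(3) by (intro bdd_aboveI2[of _ _ "B + c"]) (force simp: abs_le_iff)
  have "(SUP a\<in>A. f a) \<le> (SUP a\<in>A. g a) + c"
  proof (rule cSUP_least[OF assms(1)])
    fix a assume a: "a \<in> A"
    have "f a \<le> g a + c" "g a \<le> (SUP a\<in>A. g a)"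
      using assms(3)[OF a] cSUP_upper[OF a bdd_g] by (auto simp: abs_le_iff)
    then show "f a \<le> (SUP a\<in>A. g a) + c"
      by linarith
  qed
  moreover have "(SUP a\<in>A. g a) \<le> (SUP a\<in>A. f a) + c"
  proof (rule cSUP_least[OF assms(1)])
    fix a assume a: "a \<in> A"
    have "g a \<le> f a + c" "f a \<le> (SUP a\<in>A. f a)"
      using assms(3)[OF a] cSUP_upper[OF a assms(2)] by (auto simp: abs_le_iff)
    then show "g a \<le> (SUP a\<in>A. f a) + c"
      by linarith
  qed
  ultimately show ?thesis by linarith
qed

lemma abs_sum_mult_diff_le:
  fixes w f g c :: "'i \<Rightarrow> real"
  assumes "\<And>i. i \<in> S \<Longrightarrow> 0 \<le> w i" "\<And>i. i \<in> S \<Longrightarrow> \<bar>f i - g i\<bar> \<le> c i"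
  shows "\<bar>(\<Sum>i\<in>S. w i * f i) - (\<Sum>i\<in>S. w i * g i)\<bar> \<le> (\<Sum>i\<in>S. w i * c i)"
proof -
  have "\<bar>(\<Sum>i\<in>S. w i * f i) - (\<Sum>i\<in>S. w i * g i)\<bar> = \<bar>\<Sum>i\<in>S. w i * (f i - g i)\<bar>"
    by (simp add: sum_subtractf right_diff_distrib)
  also have "\<dots> \<le> (\<Sum>i\<in>S. \<bar>w i * (f i - g i)\<bar>)"
    by (rule sum_abs)
  also have "\<dots> \<le> (\<Sum>i\<in>S. w i * c i)"
    using assms by (intro sum_mono) (simp add: abs_mult mult_left_mono)
  finally show ?thesis .
qed

lemma norm_matrix_vector_mult_le:
  fixes B :: "real^'n^'m"
  shows "norm (B *v v) \<le> norm B * norm v"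
proof -
  have "(norm x)\<^sup>2 = (\<Sum>i\<in>UNIV. (x $ i)\<^sup>2)" for x :: "real^'m"
    unfolding power2_norm_eq_inner inner_vec_def by (simp add: power2_eq_square)
  moreover have "(B *v v) $ i = B $ i \<bullet> v" for i
    by (simp add: matrix_vector_mult_def inner_vec_def)
  moreover have rows: "(norm B)\<^sup>2 = (\<Sum>i\<in>UNIV. (norm (B $ i))\<^sup>2)"
    unfolding power2_norm_eq_inner inner_vec_def ..
  ultimately have "(norm (B *v v))\<^sup>2 = (\<Sum>i\<in>UNIV. (B $ i \<bullet> v)\<^sup>2)"
    by simp
  also have "\<dots> \<le> (\<Sum>i\<in>UNIV. (norm (B $ i))\<^sup>2 * (norm v)\<^sup>2)"
    using Cauchy_Schwarz_ineq by (intro sum_mono) (simp add: power_mult_distrib power2_norm_eq_inner)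
  also have "\<dots> = (norm B * norm v)\<^sup>2"
    by (simp add: rows power_mult_distrib sum_distrib_right)
  finally show ?thesis
    by (rule power2_le_imp_le) simp
qed

lemma bounded_linear_matrix_vector_mult_left:
  "bounded_linear (\<lambda>B::real^'n^'m. B *v v)"
  by (rule bounded_linear_intro[of _ "norm v"])
     (simp_all add: matrix_vector_mult_add_rdistrib scaleR_matrix_vector_assoc
       norm_matrix_vector_mult_le)

lemma weighted_mean_norm_add_le:
  fixes v :: "'i \<Rightarrow> 'a::real_inner"
  assumes "finite S" "\<And>i. i \<in> S \<Longrightarrow> 0 \<le> w i" "(\<Sum>i\<in>S. w i) = 1"
    and centered: "(\<Sum>i\<in>S. w i *\<^sub>R v i) = 0"
  shows "(\<Sum>i\<in>S. w i * norm (u + v i)) \<le> sqrt ((norm u)\<^sup>2 + (\<Sum>i\<in>S. w i * (norm (v i))\<^sup>2))"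
proof (rule real_le_rsqrt)
  have square: "(norm (u + v i))\<^sup>2 = (norm u)\<^sup>2 + 2 * (u \<bullet> v i) + (norm (v i))\<^sup>2" for i
    using dot_norm[of u "v i"] by simp
  have "S \<noteq> {}" using assms(3) by auto
  then have "(\<Sum>i\<in>S. w i * norm (u + v i))\<^sup>2 \<le> (\<Sum>i\<in>S. w i * (norm (u + v i))\<^sup>2)"
    using convex_on_sum[OF assms(1) _ convex_power2 assms(3), of "\<lambda>i. norm (u + v i)"] assms(2)
    by simp
  also have "\<dots> = (\<Sum>i\<in>S. w i * (norm u)\<^sup>2 + 2 * (w i * (u \<bullet> v i)) + w i * (norm (v i))\<^sup>2)"
    unfolding square by (simp only: distrib_left mult.left_commute[of "w _" 2])
  also have "\<dots> = (norm u)\<^sup>2 * (\<Sum>i\<in>S. w i) + 2 * (\<Sum>i\<in>S. w i * (u \<bullet> v i))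
      + (\<Sum>i\<in>S. w i * (norm (v i))\<^sup>2)"
    by (simp only: sum.distrib sum_distrib_left sum_distrib_right mult.commute)
  also have "(\<Sum>i\<in>S. w i * (u \<bullet> v i)) = u \<bullet> (\<Sum>i\<in>S. w i *\<^sub>R v i)"
    by (simp add: inner_sum_right)
  finally show "(\<Sum>i\<in>S. w i * norm (u + v i))\<^sup>2 \<le> (norm u)\<^sup>2 + (\<Sum>i\<in>S. w i * (norm (v i))\<^sup>2)"
    using assms(3) centered by simp
qed

lemma sqrt_sq_add_le:
  fixes a b r :: real
  assumes "1 \<le> a" "0 \<le> b" "0 \<le> r"
  shows "sqrt ((a * r)\<^sup>2 + b * r\<^sup>2) \<le> (a + b) * r"
proof (rule real_le_lsqrt)
  have "(a + b)\<^sup>2 = a\<^sup>2 + b + (b * (2 * a - 1) + b\<^sup>2)"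
    by (simp add: power2_eq_square algebra_simps)
  moreover have "0 \<le> b * (2 * a - 1) + b\<^sup>2"
    using assms(1,2) by (intro add_nonneg_nonneg mult_nonneg_nonneg) auto
  ultimately have "a\<^sup>2 + b \<le> (a + b)\<^sup>2"
    by linarith
  then have "(a\<^sup>2 + b) * r\<^sup>2 \<le> (a + b)\<^sup>2 * r\<^sup>2"
    by (rule mult_right_mono) simp
  then show "(a * r)\<^sup>2 + b * r\<^sup>2 \<le> ((a + b) * r)\<^sup>2"
    unfolding power_mult_distrib by (simp only: distrib_right)
qed (use assms in simp)

lemma sum_bool_funs_prod_if:
  fixes a b :: "'d::finite \<Rightarrow> real"
  shows "(\<Sum>e\<in>(UNIV::('d \<Rightarrow> bool) set). \<Prod>j\<in>UNIV. if e j then a j else b j)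
    = (\<Prod>j\<in>UNIV. a j + b j)"
proof -
  have "(\<Sum>e\<in>(UNIV::('d \<Rightarrow> bool) set). \<Prod>j\<in>UNIV. if e j then a j else b j)
      = (\<Sum>X\<in>Pow UNIV. prod a X * prod b (UNIV - X))"
    by (rule sum.reindex_bij_witness[of _ "\<lambda>X j. j \<in> X" "\<lambda>e. {j. e j}"])
       (auto simp: prod.If_cases Compl_eq_Diff_UNIV)
  also have "\<dots> = (\<Prod>j\<in>UNIV. a j + b j)"
    by (rule prod_add[symmetric]) simp
  finally show ?thesis .
qed

lemma interp_convex_combination:
  fixes dx x :: "real^'d"
  assumes dx: "\<forall>j. dx $ j > 0"
  obtains w :: "('d \<Rightarrow> bool) \<Rightarrow> real" and node :: "('d \<Rightarrow> bool) \<Rightarrow> int^'d"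
  where "\<And>e. 0 \<le> w e" "(\<Sum>e\<in>UNIV. w e) = 1"
    "\<And>e. norm (x - grid_pt dx (node e)) \<le> norm dx"
    "\<And>g. interp dx g x = (\<Sum>e\<in>UNIV. w e * g (node e))"
proof -
  define m where "m = (\<chi> j. \<lfloor>x$j / dx$j\<rfloor>)"
  define \<theta> where "\<theta> = (\<lambda>j. x$j / dx$j - real_of_int (m$j))"
  define w where "w = (\<lambda>e::'d \<Rightarrow> bool. \<Prod>j\<in>UNIV. if e j then \<theta> j else 1 - \<theta> j)"
  define node where "node = (\<lambda>e::'d \<Rightarrow> bool. (\<chi> j. m$j + (if e j then 1 else 0)) :: int^'d)"
  have \<theta>: "0 \<le> \<theta> j" "\<theta> j < 1" for j
    unfolding \<theta>_def m_def by (simp_all add: of_int_floor_le) linarith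
  have w_nonneg: "0 \<le> w e" for e
    unfolding w_def using \<theta> by (intro prod_nonneg) (auto simp: less_imp_le)
  moreover have w_sum: "(\<Sum>e\<in>UNIV. w e) = 1"
    unfolding w_def sum_bool_funs_prod_if by simp
  moreover have node_near: "norm (x - grid_pt dx (node e)) \<le> norm dx" for e
  proof (rule norm_le_componentwise_cart)
    fix j
    have "(x - grid_pt dx (node e)) $ j = dx$j * (\<theta> j - (if e j then 1 else 0))"
      using dx[rule_format, of j] unfolding grid_pt_def node_def \<theta>_def
      by (simp add: algebra_simps)
    moreover have "\<bar>\<theta> j - (if e j then 1 else 0)\<bar> \<le> 1"
      using \<theta>[of j] by auto
    ultimately show "norm ((x - grid_pt dx (node e)) $ j) \<le> norm (dx $ j)"
      using dx[rule_format, of j] by (simp add: abs_mult mult_left_le)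
  qed
  moreover have interp_eq: "interp dx g x = (\<Sum>e\<in>UNIV. w e * g (node e))" for g
    unfolding interp_def Let_def w_def node_def \<theta>_def m_def ..
  ultimately show ?thesis
    by (rule that)
qed

lemma interp_error:
  fixes dx :: "real^'d" and f :: "real^'d \<Rightarrow> real"
  assumes dx: "\<forall>j. dx $ j > 0" and f: "Lf-lipschitz_on UNIV f"
    and grid: "\<And>m. \<bar>f (grid_pt dx m) - g m\<bar> \<le> E"
  shows "\<bar>f x - interp dx g x\<bar> \<le> E + Lf * norm dx"
proof -
  obtain w :: "('d \<Rightarrow> bool) \<Rightarrow> real" and node :: "('d \<Rightarrow> bool) \<Rightarrow> int^'d"
    where w: "\<And>e. 0 \<le> w e" "(\<Sum>e\<in>UNIV. w e) = 1"
    and node: "\<And>e. norm (x - grid_pt dx (node e)) \<le> norm dx"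
    and interp: "\<And>g. interp dx g x = (\<Sum>e\<in>UNIV. w e * g (node e))"
    using interp_convex_combination[OF dx, of x] by blast
  have "\<bar>f x - g (node e)\<bar> \<le> E + Lf * norm dx" for e
  proof -
    have "\<bar>f x - f (grid_pt dx (node e))\<bar> \<le> Lf * norm (x - grid_pt dx (node e))"
      using lipschitz_on_normD[OF f] by simp
    also have "\<dots> \<le> Lf * norm dx"
      using node lipschitz_on_nonneg[OF f] by (rule mult_left_mono)
    finally have "\<bar>f x - f (grid_pt dx (node e))\<bar> \<le> Lf * norm dx" .
    then show ?thesis
      using grid[of "node e"] by linarith
  qed
  then have "\<bar>(\<Sum>e\<in>UNIV. w e * f x) - (\<Sum>e\<in>UNIV. w e * g (node e))\<bar>
      \<le> (\<Sum>e\<in>UNIV. w e * (E + Lf * norm dx))"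
    by (intro abs_sum_mult_diff_le w)
  moreover have "(\<Sum>e\<in>UNIV. w e * f x) = f x"
    and "(\<Sum>e\<in>UNIV. w e * (E + Lf * norm dx)) = E + Lf * norm dx"
    by (simp_all add: w(2) flip: sum_distrib_right)
  ultimately show ?thesis
    by (simp only: interp)
qed

lemma power_one_plus_div_le_exp:
  assumes "0 \<le> x" "j \<le> N"
  shows "(1 + x / real N) ^ j \<le> exp x"
proof -
  have "(1 + x / real N) ^ j \<le> (1 + x / real N) ^ N"
    using assms by (intro power_increasing) auto
  also have "\<dots> \<le> exp (x / real N) ^ N"
    using assms(1) by (intro power_mono) auto
  also have "\<dots> \<le> exp x"
    using assms(1) by (cases "N = 0") (auto simp flip: exp_of_nat_mult)
  finally show ?thesis .
qed

(* Each step evaluates the coefficients at a single time, so only their Lipschitz continuity in x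
   is needed; of the exactness of the cubature only the moments of order at most one are used. *)
locale cubature_scheme =
  fixes T C1 :: real
    and mu :: "real \<Rightarrow> real^'d \<Rightarrow> real^'q \<Rightarrow> real^'d"
    and sg :: "real \<Rightarrow> real^'d \<Rightarrow> real^'q \<Rightarrow> real^'p^'d"
    and A :: "(real^'q) set"
    and Mh :: nat
    and lam :: "nat \<Rightarrow> real"
    and xi :: "nat \<Rightarrow> real^'p"
  assumes T_nonneg: "0 \<le> T"
    and compact_A: "compact A" and A_nonempty: "A \<noteq> {}"
    and continuous_mu: "continuous_on ({0..T} \<times> UNIV \<times> A) (\<lambda>(t, x, a). mu t x a)"
    and continuous_sg: "continuous_on ({0..T} \<times> UNIV \<times> A) (\<lambda>(t, x, a). sg t x a)"
    and lipschitz_coeffs: "\<And>t x y a. t \<in> {0..T} \<Longrightarrow> a \<in> A \<Longrightarrow>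
      norm (mu t x a - mu t y a) + norm (sg t x a - sg t y a) \<le> C1 * norm (x - y)"
    and C1_nonneg: "0 \<le> C1"
    and weights_nonneg: "\<And>i. i < Mh \<Longrightarrow> 0 \<le> lam i"
    and weights_sum: "(\<Sum>i<Mh. lam i) = 1"
    and nodes_centered: "(\<Sum>i<Mh. lam i *\<^sub>R xi i) = 0"
begin

abbreviation step :: "real \<Rightarrow> real \<Rightarrow> (real^'d \<Rightarrow> real) \<Rightarrow> real^'d \<Rightarrow> real" where
  "step h t \<equiv> dp_step h mu sg A Mh lam xi t"

abbreviation node_pt :: "real \<Rightarrow> real \<Rightarrow> real^'d \<Rightarrow> real^'q \<Rightarrow> nat \<Rightarrow> real^'d" where
  "node_pt h t x a i \<equiv> x + h *\<^sub>R mu t x a + sqrt h *\<^sub>R (sg t x a *v xi i)"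

definition nodes_second_moment :: real where
  "nodes_second_moment = (\<Sum>i<Mh. lam i * (norm (xi i))\<^sup>2)"

definition growth_rate :: real where
  "growth_rate = C1 + C1\<^sup>2 * nodes_second_moment"

lemma nodes_second_moment_nonneg: "0 \<le> nodes_second_moment"
  unfolding nodes_second_moment_def using weights_nonneg by (auto intro!: sum_nonneg)

lemma growth_rate_nonneg: "0 \<le> growth_rate"
  unfolding growth_rate_def using C1_nonneg nodes_second_moment_nonneg by simp

lemma time_grid_mem: "real (N - Suc k) * (T / real N) \<in> {0..T}"
proof -
  have "real (N - Suc k) * (T / real N) \<le> real N * (T / real N)"
    using T_nonneg by (intro mult_right_mono) auto
  also have "\<dots> \<le> T"
    using T_nonneg by (cases "N = 0") auto
  finally show ?thesis
    using T_nonneg by simp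
qed

lemma bdd_above_step_terms:
  assumes t: "t \<in> {0..T}" and f: "continuous_on UNIV f"
  shows "bdd_above ((\<lambda>a. \<Sum>i<Mh. lam i * f (node_pt h t x a i)) ` A)"
proof -
  have pair: "continuous_on A (\<lambda>a. (t, x, a))"
    by (intro continuous_intros)
  have slice: "(\<lambda>a. (t, x, a)) ` A \<subseteq> {0..T} \<times> UNIV \<times> A"
    using t by auto
  have "continuous_on A ((\<lambda>(t, x, a). mu t x a) \<circ> (\<lambda>a. (t, x, a)))"
    by (rule continuous_on_compose[OF pair continuous_on_subset[OF continuous_mu slice]])
  moreover have "continuous_on A ((\<lambda>(t, x, a). sg t x a) \<circ> (\<lambda>a. (t, x, a)))"
    by (rule continuous_on_compose[OF pair continuous_on_subset[OF continuous_sg slice]])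
  ultimately have "continuous_on A (\<lambda>a. mu t x a)" and "continuous_on A (\<lambda>a. sg t x a)"
    by (simp_all add: o_def)
  then have "continuous_on A (\<lambda>a. \<Sum>i<Mh. lam i * f (node_pt h t x a i))"
    by (intro continuous_intros continuous_on_compose2[OF f]
        bounded_linear.continuous_on[OF bounded_linear_matrix_vector_mult_left]) auto
  then have "compact ((\<lambda>a. \<Sum>i<Mh. lam i * f (node_pt h t x a i)) ` A)"
    using compact_A by (rule compact_continuous_image)
  then show ?thesis
    by (intro bounded_imp_bdd_above compact_imp_bounded)
qed

lemma step_abs_diff_le:
  assumes t: "t \<in> {0..T}" and f: "continuous_on UNIV f" and fg: "\<And>z. \<bar>f z - g z\<bar> \<le> c"
  shows "\<bar>step h t f x - step h t g x\<bar> \<le> c"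
  unfolding dp_step_def
proof (rule abs_cSUP_diff_le[OF A_nonempty bdd_above_step_terms[OF t f]])
  fix a
  have "\<bar>(\<Sum>i<Mh. lam i * f (node_pt h t x a i)) - (\<Sum>i<Mh. lam i * g (node_pt h t x a i))\<bar>
      \<le> (\<Sum>i<Mh. lam i * c)"
    using weights_nonneg fg by (intro abs_sum_mult_diff_le) auto
  then show "\<bar>(\<Sum>i<Mh. lam i * f (node_pt h t x a i)) - (\<Sum>i<Mh. lam i * g (node_pt h t x a i))\<bar> \<le> c"
    by (simp add: weights_sum flip: sum_distrib_right)
qed

lemma sum_weights_noise_eq_0: "(\<Sum>i<Mh. lam i *\<^sub>R (sqrt h *\<^sub>R (B *v xi i))) = 0"
proof -
  have "(\<Sum>i<Mh. lam i *\<^sub>R (sqrt h *\<^sub>R (B *v xi i))) = sqrt h *\<^sub>R (B *v (\<Sum>i<Mh. lam i *\<^sub>R xi i))"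
    by (simp add: linear_sum[OF matrix_vector_mul_linear] o_def matrix_vector_mult_scaleR
        scaleR_sum_right mult.commute)
  then show ?thesis
    by (simp add: nodes_centered)
qed

lemma sum_weights_noise_sq_le:
  assumes B: "norm B \<le> c" and h: "0 \<le> h"
  shows "(\<Sum>i<Mh. lam i * (norm (sqrt h *\<^sub>R (B *v xi i)))\<^sup>2) \<le> h * c\<^sup>2 * nodes_second_moment"
proof -
  have "(norm (sqrt h *\<^sub>R (B *v xi i)))\<^sup>2 \<le> h * c\<^sup>2 * (norm (xi i))\<^sup>2" for i
  proof -
    have "norm (B *v xi i) \<le> c * norm (xi i)"
      using norm_matrix_vector_mult_le[of B "xi i"] mult_right_mono[OF B norm_ge_zero[of "xi i"]]
      by linarith
    then have "(norm (B *v xi i))\<^sup>2 \<le> (c * norm (xi i))\<^sup>2"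
      by (rule power_mono) simp
    then have "h * (norm (B *v xi i))\<^sup>2 \<le> h * (c * norm (xi i))\<^sup>2"
      using h by (rule mult_left_mono)
    then show ?thesis
      using h by (simp add: power_mult_distrib ac_simps)
  qed
  then have "(\<Sum>i<Mh. lam i * (norm (sqrt h *\<^sub>R (B *v xi i)))\<^sup>2)
      \<le> (\<Sum>i<Mh. lam i * (h * c\<^sup>2 * (norm (xi i))\<^sup>2))"
    using weights_nonneg by (intro sum_mono mult_left_mono) auto
  also have "\<dots> = h * c\<^sup>2 * nodes_second_moment"
    unfolding nodes_second_moment_def by (simp add: sum_distrib_left ac_simps)
  finally show ?thesis .
qed

lemma mean_node_displacement_le:
  assumes t: "t \<in> {0..T}" and a: "a \<in> A" and h: "0 \<le> h"
  shows "(\<Sum>i<Mh. lam i * norm (node_pt h t x a i - node_pt h t y a i))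
    \<le> (1 + growth_rate * h) * norm (x - y)"
proof -
  define r where "r = norm (x - y)"
  define D where "D = (x - y) + h *\<^sub>R (mu t x a - mu t y a)"
  define B where "B = sg t x a - sg t y a"
  have mu_diff: "norm (mu t x a - mu t y a) \<le> C1 * r" and B: "norm B \<le> C1 * r"
    using lipschitz_coeffs[OF t a, of x y] norm_ge_zero[of B] norm_ge_zero[of "mu t x a - mu t y a"]
    unfolding B_def r_def by linarith+
  have "norm D \<le> r + h * norm (mu t x a - mu t y a)"
    unfolding D_def r_def using h norm_triangle_ineq[of "x - y" "h *\<^sub>R (mu t x a - mu t y a)"]
    by simp
  also have "\<dots> \<le> r + h * (C1 * r)"
    using mult_left_mono[OF mu_diff h] by simp
  also have "\<dots> = (1 + C1 * h) * r"
    by (simp add: algebra_simps)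
  finally have D: "norm D \<le> (1 + C1 * h) * r" .
  have node_diff: "node_pt h t x a i - node_pt h t y a i = D + sqrt h *\<^sub>R (B *v xi i)" for i
    unfolding D_def B_def by (simp add: algebra_simps matrix_vector_mult_diff_rdistrib)
  have "(\<Sum>i<Mh. lam i * norm (node_pt h t x a i - node_pt h t y a i))
      \<le> sqrt ((norm D)\<^sup>2 + (\<Sum>i<Mh. lam i * (norm (sqrt h *\<^sub>R (B *v xi i)))\<^sup>2))"
    unfolding node_diff using weights_nonneg
    by (intro weighted_mean_norm_add_le weights_sum sum_weights_noise_eq_0) auto
  also have "\<dots> \<le> sqrt (((1 + C1 * h) * r)\<^sup>2 + (C1\<^sup>2 * nodes_second_moment * h) * r\<^sup>2)"
    using D sum_weights_noise_sq_le[OF B h]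
    by (intro real_sqrt_le_mono add_mono power_mono) (auto simp: power_mult_distrib ac_simps)
  also have "\<dots> \<le> (1 + C1 * h + C1\<^sup>2 * nodes_second_moment * h) * r"
    using C1_nonneg h nodes_second_moment_nonneg by (intro sqrt_sq_add_le) (auto simp: r_def)
  finally show ?thesis
    unfolding r_def growth_rate_def by (simp add: algebra_simps)
qed

lemma lipschitz_on_step:
  assumes t: "t \<in> {0..T}" and h: "0 \<le> h" and f: "Lf-lipschitz_on UNIV f"
  shows "(Lf * (1 + growth_rate * h))-lipschitz_on UNIV (step h t f)"
proof (rule lipschitz_onI)
  have Lf: "0 \<le> Lf"
    using f by (rule lipschitz_on_nonneg)
  then show "0 \<le> Lf * (1 + growth_rate * h)"
    using growth_rate_nonneg h by simp
  fix x y :: "real^'d"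
  have "\<bar>step h t f x - step h t f y\<bar> \<le> Lf * ((1 + growth_rate * h) * norm (x - y))"
    unfolding dp_step_def
  proof (rule abs_cSUP_diff_le[OF A_nonempty
        bdd_above_step_terms[OF t lipschitz_on_continuous_on[OF f]]])
    fix a assume a: "a \<in> A"
    have "\<bar>(\<Sum>i<Mh. lam i * f (node_pt h t x a i)) - (\<Sum>i<Mh. lam i * f (node_pt h t y a i))\<bar>
        \<le> (\<Sum>i<Mh. lam i * (Lf * norm (node_pt h t x a i - node_pt h t y a i)))"
      using weights_nonneg lipschitz_on_normD[OF f] by (intro abs_sum_mult_diff_le) auto
    also have "\<dots> = Lf * (\<Sum>i<Mh. lam i * norm (node_pt h t x a i - node_pt h t y a i))"
      by (simp add: sum_distrib_left algebra_simps)
    also have "\<dots> \<le> Lf * ((1 + growth_rate * h) * norm (x - y))"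
      by (intro mult_left_mono mean_node_displacement_le t a h Lf)
    finally show "\<bar>(\<Sum>i<Mh. lam i * f (node_pt h t x a i)) - (\<Sum>i<Mh. lam i * f (node_pt h t y a i))\<bar>
        \<le> Lf * ((1 + growth_rate * h) * norm (x - y))" .
  qed
  then show "dist (step h t f x) (step h t f y) \<le> Lf * (1 + growth_rate * h) * dist x y"
    by (simp add: dist_real_def dist_norm mult.assoc)
qed

lemma lipschitz_on_vhat_rev:
  assumes "L-lipschitz_on UNIV psi"
  shows "(L * (1 + growth_rate * (T / real N)) ^ k)-lipschitz_on UNIV
    (vhat_rev T N mu sg A Mh lam xi psi k)"
proof (induction k)
  case 0
  then show ?case
    using assms by simp
next
  case (Suc k)
  have "0 \<le> T / real N"
    using T_nonneg by simp
  from lipschitz_on_step[OF time_grid_mem[of N k] this Suc.IH] show ?case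
    by (simp add: ac_simps)
qed

lemma vhat_rev_grid_error:
  assumes dx: "\<forall>j. dx $ j > 0"
    and lip: "\<And>j. j < k \<Longrightarrow> \<Lambda>-lipschitz_on UNIV (vhat_rev T N mu sg A Mh lam xi psi j)"
  shows "\<bar>vhat_rev T N mu sg A Mh lam xi psi k (grid_pt dx m) - V_rev T N mu sg A Mh lam xi psi dx k m\<bar>
    \<le> real k * \<Lambda> * norm dx"
  using lip
proof (induction k arbitrary: m)
  case 0
  then show ?case by simp
next
  case (Suc k)
  let ?v = "vhat_rev T N mu sg A Mh lam xi psi k" and ?V = "V_rev T N mu sg A Mh lam xi psi dx k"
  have lip_k: "\<Lambda>-lipschitz_on UNIV ?v"
    using Suc.prems by simp
  have "\<bar>?v z - interp dx ?V z\<bar> \<le> real k * \<Lambda> * norm dx + \<Lambda> * norm dx" for z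
    using Suc by (intro interp_error[OF dx lip_k]) auto
  then have "\<bar>step (T / real N) (real (N - Suc k) * (T / real N)) ?v (grid_pt dx m)
      - step (T / real N) (real (N - Suc k) * (T / real N)) (interp dx ?V) (grid_pt dx m)\<bar>
      \<le> real k * \<Lambda> * norm dx + \<Lambda> * norm dx"
    by (intro step_abs_diff_le time_grid_mem lipschitz_on_continuous_on[OF lip_k])
  then show ?case
    by (simp add: algebra_simps)
qed

lemma vhat_grid_error:
  assumes psi: "L-lipschitz_on UNIV psi" and T: "0 < T" and n: "n \<le> N" and dx: "\<forall>j. dx $ j > 0"
  shows "\<bar>vhat T N mu sg A Mh lam xi psi n (grid_pt dx m) - V T N mu sg A Mh lam xi psi dx n m\<bar>
    \<le> T * (L * exp (growth_rate * T)) * norm dx / (T / real N)"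
proof -
  define \<Lambda> where "\<Lambda> = L * exp (growth_rate * T)"
  have "0 \<le> \<Lambda>"
    unfolding \<Lambda>_def using lipschitz_on_nonneg[OF psi] by simp
  have "\<Lambda>-lipschitz_on UNIV (vhat_rev T N mu sg A Mh lam xi psi j)" if "j \<le> N" for j
  proof (rule lipschitz_on_le[OF lipschitz_on_vhat_rev[OF psi]])
    have "(1 + growth_rate * T / real N) ^ j \<le> exp (growth_rate * T)"
      using growth_rate_nonneg T_nonneg that by (intro power_one_plus_div_le_exp) auto
    then show "L * (1 + growth_rate * (T / real N)) ^ j \<le> \<Lambda>"
      unfolding \<Lambda>_def using lipschitz_on_nonneg[OF psi] by (simp add: mult_left_mono)
  qed
  then have "\<bar>vhat T N mu sg A Mh lam xi psi n (grid_pt dx m) - V T N mu sg A Mh lam xi psi dx n m\<bar>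
      \<le> real (N - n) * \<Lambda> * norm dx"
    unfolding vhat_def V_def by (intro vhat_rev_grid_error[OF dx]) auto
  also have "\<dots> \<le> real N * \<Lambda> * norm dx"
    using \<open>0 \<le> \<Lambda>\<close> by (intro mult_right_mono) auto
  also have "\<dots> = T * \<Lambda> * norm dx / (T / real N)"
    using T by (cases "N = 0") auto
  finally show ?thesis
    unfolding \<Lambda>_def .
qed

end

theorem proposition3p4:
  fixes T C0 L :: real
    and mu :: "real \<Rightarrow> real^'d \<Rightarrow> real^'q \<Rightarrow> real^'d"
    and sg :: "real \<Rightarrow> real^'d \<Rightarrow> real^'q \<Rightarrow> real^'p^'d"
    and A :: "(real^'q) set"
    and psi :: "real^'d \<Rightarrow> real"
    and M Mh :: nat
    and lam :: "nat \<Rightarrow> real"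
    and xi :: "nat \<Rightarrow> real^'p"
  assumes "T > 0"
    and "compact A" and "A \<noteq> {}"
    and "continuous_on ({0..T} \<times> UNIV \<times> A) (\<lambda>(t, x, a). mu t x a)"
    and "continuous_on ({0..T} \<times> UNIV \<times> A) (\<lambda>(t, x, a). sg t x a)"
    and "\<forall>t\<in>{0..T}. \<forall>s\<in>{0..T}. \<forall>x y. \<forall>a\<in>A.
           norm (mu t x a - mu s y a) + norm (sg t x a - sg s y a)
             \<le> C0 * (norm (x - y) + sqrt \<bar>t - s\<bar>)"
    and "continuous_on UNIV psi"
    and "\<forall>x y. \<bar>psi x - psi y\<bar> \<le> L * norm (x - y)"
    and "M \<ge> 2"
    and "\<forall>i<Mh. lam i \<ge> 0"
    and "cubature_exact Mh lam xi (2 * M - 1)"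
  shows "\<exists>C\<ge>0. \<forall>(N::nat) (dx::real^'d). N \<ge> 1 \<longrightarrow> (\<forall>j. dx $ j > 0) \<longrightarrow>
           (\<forall>n\<le>N. \<forall>m::int^'d.
              \<bar>vhat T N mu sg A Mh lam xi psi n (grid_pt dx m)
               - V T N mu sg A Mh lam xi psi dx n m\<bar>
                \<le> C * norm dx / (T / real N))"
proof -
  have lipschitz_coeffs:
    "norm (mu t x a - mu t y a) + norm (sg t x a - sg t y a) \<le> \<bar>C0\<bar> * norm (x - y)"
    if "t \<in> {0..T}" "a \<in> A" for t x y a
    using assms(6) that abs_ge_self[of C0]
    by (smt (verit) mult_right_mono norm_ge_zero real_sqrt_zero)
  have nodes_centered: "(\<Sum>i<Mh. lam i *\<^sub>R xi i) = 0"
    using assms(9) by (intro cubature_exact_sum_nodes[OF assms(11)]) simp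
  interpret cubature_scheme T "\<bar>C0\<bar>" mu sg A Mh lam xi
    using assms lipschitz_coeffs nodes_centered cubature_exact_sum_weights[OF assms(11)]
    by unfold_locales auto
  have psi: "\<bar>L\<bar>-lipschitz_on UNIV psi"
  proof (rule lipschitz_onI)
    fix x y :: "real^'d"
    have "\<bar>psi x - psi y\<bar> \<le> L * norm (x - y)"
      using assms(8) by blast
    also have "\<dots> \<le> \<bar>L\<bar> * norm (x - y)"
      by (simp add: mult_right_mono)
    finally show "dist (psi x) (psi y) \<le> \<bar>L\<bar> * dist x y"
      by (simp add: dist_real_def dist_norm)
  qed simp
  show ?thesis
    using vhat_grid_error[OF psi assms(1)] assms(1)
    by (intro exI[of _ "T * (\<bar>L\<bar> * exp (growth_rate * T))"]) auto
qed

end
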